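(* Let $D_j\subset\mathbb{R}^{L_j}$, $1\le j\le d$, be compact and convex, $D=\prod_jD_j$, and let $\xi$ be a random vector in $\prod_j\mathbb{R}^{L_j}$ with density $p$ bounded on $D^+(\varepsilon)=\prod_j\bigcup_{x_j\in D_j}\bar B_j(x_j,\varepsilon)$ for some $\varepsilon>0$. Let $\xi^1,\dots,\xi^n$ be i.i.d. copies of $\xi$ and $\tilde\xi^1,\dots,\tilde\xi^n$ random vectors with $\max_{1\le i\le n}\|\tilde\xi^i_j-\xi^i_j\|_j=O_p(a_{nj})$, $a_{nj}=o(1)$, for all $j$. Let $p_0^D=\Pr(\xi\in D)$, $\check p_0^D=n^{-1}\sum_iI(\xi^i\in D)$ and $\hat p_0^D=n^{-1}\sum_iI(\tilde\xi^i\in D)$. Then $|\hat p_0^D-\check p_0^D|=O_p\big(\sum_ja_{nj}+n^{-1/2}(\sum_ja_{nj})^{1/2}\big)$ and $|\hat p_0^D-p_0^D|=O_p\big(\sum_ja_{nj}+n^{-1/2}\big)$.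
   Context: $\|\cdot\|_j$ is the Euclidean norm on $\mathbb{R}^{L_j}$ and $\bar B_j(x,R)$ the closed ball; $\xi^i_j$ denotes the $j$-th block of $\xi^i$. *)

theory Defs
  imports "HOL-Probability.Probability"
begin

text \<open>The product space \<open>\<Prod>_j R^{L_j}\<close> is encoded as \<open>real^'n\<close> whose coordinate set
  is partitioned into blocks by \<open>blk :: 'n \<Rightarrow> 'd\<close>; block \<open>j\<close> consists of the coordinates
  \<open>i\<close> with \<open>blk i = j\<close>, so \<open>L_j = card {i. blk i = j}\<close>.  The block \<open>j\<close> component of a
  vector is identified (isometrically) with its projection onto the block subspace.\<close>

definition bproj :: "('n::finite \<Rightarrow> 'd) \<Rightarrow> 'd \<Rightarrow> real^'n \<Rightarrow> real^'n" where
  "bproj blk j x = (\<chi> i. if blk i = j then x $ i else 0)"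

definition block_subspace :: "('n::finite \<Rightarrow> 'd) \<Rightarrow> 'd \<Rightarrow> (real^'n) set" where
  "block_subspace blk j = {x. \<forall>i. blk i \<noteq> j \<longrightarrow> x $ i = 0}"

definition prod_blocks :: "('n::finite \<Rightarrow> 'd) \<Rightarrow> ('d \<Rightarrow> (real^'n) set) \<Rightarrow> (real^'n) set" where
  "prod_blocks blk D = {x. \<forall>j. bproj blk j x \<in> D j}"

definition enlarged :: "('n::finite \<Rightarrow> 'd) \<Rightarrow> ('d \<Rightarrow> (real^'n) set) \<Rightarrow> real \<Rightarrow> (real^'n) set" where
  "enlarged blk D \<epsilon> = {x. \<forall>j. \<exists>y\<in>D j. norm (bproj blk j x - y) \<le> \<epsilon>}"

definition Op :: "'a measure \<Rightarrow> (nat \<Rightarrow> 'a \<Rightarrow> real) \<Rightarrow> (nat \<Rightarrow> real) \<Rightarrow> bool" where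
  "Op M X r \<longleftrightarrow> (\<forall>\<eta>>0. \<exists>C N. \<forall>n\<ge>N. measure M {\<omega> \<in> space M. \<bar>X n \<omega>\<bar> > C * r n} < \<eta>)"

end

(* If every block of the perturbed observation is within delta of the corresponding block of the
   original one, the two indicators of D can only differ when the original observation lies in
   the delta-boundary layer of one of the convex cylinders {x. x_j in D_j}, intersected with
   D^+(eps).  Comparing the homothetic images of a convex set with ratios 1 + t and 1 - t shows
   that, on bounded sets, this layer has Lebesgue measure O(delta); a convex set with empty
   interior lies in a hyperplane and is handled through a half-space.  The bounded density then
   gives Pr(xi in layer) <= K delta.  With delta = C * sum_j a_nj, outside an event of small
   probability |p_hat - p_check| is at most the empirical frequency of the layer, which by
   Chebyshev's inequality is K delta + O(sqrt (K delta / n)).  The second bound adds the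
   O(n^(-1/2)) deviation of p_check from p_0 and uses sqrt (s / n) <= s + n^(-1/2). *)

theory Submission
  imports Defs
begin

section \<open>Boundary layers of convex sets\<close>

definition boundary_layer :: "'a::metric_space set \<Rightarrow> real \<Rightarrow> 'a set" where
  "boundary_layer E \<delta> = {x. (\<exists>z\<in>E. dist x z \<le> \<delta>) \<and> \<not> cball x \<delta> \<subseteq> E}"

lemma closed_thickening:
  fixes E :: "'a::euclidean_space set"
  assumes "closed E" "0 \<le> \<delta>"
  shows "closed {x. \<exists>z\<in>E. dist x z \<le> \<delta>}"
proof -
  have "{x. \<exists>z\<in>E. dist x z \<le> \<delta>} = (\<Union>z\<in>E. \<Union>w\<in>cball 0 \<delta>. {z + w})"
  proof (intro set_eqI iffI)
    fix x
    assume "x \<in> {x. \<exists>z\<in>E. dist x z \<le> \<delta>}"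
    then obtain z where "z \<in> E" "dist x z \<le> \<delta>"
      by auto
    moreover have "x - z \<in> cball 0 \<delta>"
      using \<open>dist x z \<le> \<delta>\<close> by (simp add: dist_norm norm_minus_commute)
    moreover have "x = z + (x - z)"
      by simp
    ultimately show "x \<in> (\<Union>z\<in>E. \<Union>w\<in>cball 0 \<delta>. {z + w})"
      by blast
  next
    fix x
    assume "x \<in> (\<Union>z\<in>E. \<Union>w\<in>cball 0 \<delta>. {z + w})"
    then obtain z w where "z \<in> E" "w \<in> cball 0 \<delta>" "x = z + w"
      by auto
    then show "x \<in> {x. \<exists>z\<in>E. dist x z \<le> \<delta>}"
      by (intro CollectI bexI[of _ z]) (auto simp: dist_norm)
  qed
  then show ?thesis
    using closed_compact_sums[OF assms(1) compact_cball[of 0 \<delta>]] by simp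
qed

lemma closed_inner_parallel_set:
  fixes E :: "'a::real_normed_vector set"
  assumes "closed E"
  shows "closed {x. cball x \<delta> \<subseteq> E}"
proof -
  have "{x. cball x \<delta> \<subseteq> E} = (\<Inter>w\<in>cball 0 \<delta>. (\<lambda>x. x + w) -` E)"
  proof (intro set_eqI iffI)
    fix x
    assume "x \<in> (\<Inter>w\<in>cball 0 \<delta>. (\<lambda>x. x + w) -` E)"
    have "x \<in> (\<lambda>y. y + (v - x)) -` E" if "v \<in> cball x \<delta>" for v
    proof -
      have "v - x \<in> cball 0 \<delta>"
        using that by (simp add: dist_norm norm_minus_commute)
      then show ?thesis
        using \<open>x \<in> (\<Inter>w\<in>cball 0 \<delta>. (\<lambda>x. x + w) -` E)\<close> by blast
    qed
    then show "x \<in> {x. cball x \<delta> \<subseteq> E}"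
      by auto
  qed (auto simp: dist_norm)
  moreover have "closed ((\<lambda>x. x + w) -` E)" for w
    by (intro continuous_closed_vimage assms continuous_intros)
  ultimately show ?thesis
    by auto
qed

lemma boundary_layer_borel:
  fixes E :: "'a::euclidean_space set"
  assumes "closed E" "0 \<le> \<delta>"
  shows "boundary_layer E \<delta> \<in> sets borel"
proof -
  have "boundary_layer E \<delta> = {x. \<exists>z\<in>E. dist x z \<le> \<delta>} - {x. cball x \<delta> \<subseteq> E}"
    by (auto simp: boundary_layer_def)
  then show ?thesis
    using closed_thickening[OF assms] closed_inner_parallel_set[OF assms(1)] by auto
qed

lemma boundary_layer_nonpos:
  assumes "\<delta> \<le> 0"
  shows "boundary_layer E \<delta> = {}"
proof -
  have "cball x \<delta> \<subseteq> E" if "z \<in> E" "dist x z \<le> \<delta>" for x z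
    using that assms zero_le_dist[of x z] by (cases "\<delta> = 0") auto
  then show ?thesis
    by (auto simp: boundary_layer_def)
qed

lemma measure_lebesgue_homothety:
  fixes S :: "'a::euclidean_space set"
  shows "measure lebesgue ((\<lambda>x. c + s *\<^sub>R (x - c)) ` S) = \<bar>s\<bar> ^ DIM('a) * measure lebesgue S"
proof -
  have "(\<lambda>x. c + s *\<^sub>R (x - c)) = (\<lambda>x. s *\<^sub>R x + (c - s *\<^sub>R c))"
    by (simp add: fun_eq_iff algebra_simps)
  then show ?thesis
    by (simp only: measure_lebesgue_affine)
qed

lemma convex_homothety_image_mono:
  fixes A :: "'a::real_vector set"
  assumes "convex A" "c \<in> A" "0 \<le> s" "s \<le> s'"
  shows "(\<lambda>x. c + s *\<^sub>R (x - c)) ` A \<subseteq> (\<lambda>x. c + s' *\<^sub>R (x - c)) ` A"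
proof clarify
  fix y
  assume "y \<in> A"
  show "c + s *\<^sub>R (y - c) \<in> (\<lambda>x. c + s' *\<^sub>R (x - c)) ` A"
  proof (cases "s' = 0")
    case True
    then show ?thesis
      using assms \<open>y \<in> A\<close> by auto
  next
    case False
    define u where "u = s / s'"
    have u: "0 \<le> u" "u \<le> 1"
      using assms False by (auto simp: u_def)
    have "u *\<^sub>R y + (1 - u) *\<^sub>R c \<in> A"
      by (rule convexD[OF assms(1) \<open>y \<in> A\<close> assms(2)]) (use u in auto)
    moreover have "c + s *\<^sub>R (y - c) = c + s' *\<^sub>R ((u *\<^sub>R y + (1 - u) *\<^sub>R c) - c)"
      using False by (simp add: u_def algebra_simps)
    ultimately show ?thesis
      by blast
  qed
qed

lemma convex_homothety_shrink_mem:
  fixes E :: "'a::real_normed_vector set"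
  assumes "convex E" "cball c r \<subseteq> E" "z \<in> E" "dist x z \<le> t * r" "0 \<le> t"
  shows "c + inverse (1 + t) *\<^sub>R (x - c) \<in> E"
proof (cases "t = 0")
  case True
  then show ?thesis
    using assms by simp
next
  case False
  then have t: "t > 0"
    using assms by simp
  define w where "w = c + inverse t *\<^sub>R (x - z)"
  have "dist c w = dist x z / t"
    using t by (simp add: w_def dist_norm norm_minus_commute[of c] divide_inverse_commute)
  also have "\<dots> \<le> r"
    using assms t by (simp add: divide_le_eq mult.commute)
  finally have "w \<in> E"
    using assms by auto
  moreover have "c + inverse (1 + t) *\<^sub>R (x - c) = inverse (1 + t) *\<^sub>R z + (t / (1 + t)) *\<^sub>R w"
    using t by (simp add: w_def field_simps algebra_simps scaleR_add_right[symmetric]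
        scaleR_add_left[symmetric])
  moreover have "inverse (1 + t) *\<^sub>R z + (t / (1 + t)) *\<^sub>R w \<in> E"
    by (rule convexD[OF assms(1) assms(3) \<open>w \<in> E\<close>]) (use t in \<open>auto simp: field_simps\<close>)
  ultimately show ?thesis
    by simp
qed

lemma convex_homothety_cball_subset:
  fixes E :: "'a::real_normed_vector set"
  assumes "convex E" "cball c r \<subseteq> E" "y \<in> E" "0 \<le> t" "t \<le> 1"
  shows "cball (c + (1 - t) *\<^sub>R (y - c)) (t * r) \<subseteq> E"
proof
  fix v
  assume v: "v \<in> cball (c + (1 - t) *\<^sub>R (y - c)) (t * r)"
  show "v \<in> E"
  proof (cases "t = 0")
    case True
    then show ?thesis
      using v assms by simp
  next
    case False
    then have t: "t > 0"
      using assms by simp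
    define w where "w = c + inverse t *\<^sub>R (v - (c + (1 - t) *\<^sub>R (y - c)))"
    have "dist c w = dist v (c + (1 - t) *\<^sub>R (y - c)) / t"
      using t by (simp add: w_def dist_norm norm_minus_commute[of c] divide_inverse_commute)
    also have "\<dots> \<le> r"
      using v t by (simp add: divide_le_eq mult.commute dist_commute)
    finally have "w \<in> E"
      using assms by auto
    moreover have "v = (1 - t) *\<^sub>R y + t *\<^sub>R w"
      using t by (simp add: w_def algebra_simps)
    ultimately show ?thesis
      using convexD[OF assms(1) assms(3) \<open>w \<in> E\<close>, of "1 - t" t] assms by simp
  qed
qed

lemma boundary_layer_subset_homothety_diff:
  fixes E :: "'a::real_normed_vector set" and R :: real
  assumes "convex E" "cball c r \<subseteq> E" "0 \<le> t" "t \<le> 1"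
  defines "A \<equiv> E \<inter> cball c (\<bar>R\<bar> + norm c)"
  shows "cball 0 R \<inter> boundary_layer E (t * r)
           \<subseteq> (\<lambda>x. c + (1 + t) *\<^sub>R (x - c)) ` A - (\<lambda>x. c + (1 - t) *\<^sub>R (x - c)) ` A"
proof
  fix x
  assume x: "x \<in> cball 0 R \<inter> boundary_layer E (t * r)"
  then obtain z where z: "z \<in> E" "dist x z \<le> t * r" and not_inside: "\<not> cball x (t * r) \<subseteq> E"
    by (auto simp: boundary_layer_def)
  define y where "y = c + inverse (1 + t) *\<^sub>R (x - c)"
  have "y \<in> E"
    unfolding y_def using assms z by (intro convex_homothety_shrink_mem) auto
  moreover have "dist c y \<le> \<bar>R\<bar> + norm c"
  proof -
    have "dist c y = inverse (1 + t) * norm (x - c)"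
      using assms by (simp add: y_def dist_norm)
    also have "\<dots> \<le> norm (x - c)"
      using assms by (intro mult_left_le_one_le) (auto simp: inverse_le_1_iff)
    also have "\<dots> \<le> \<bar>R\<bar> + norm c"
      using x norm_triangle_ineq4[of x c] by auto
    finally show ?thesis .
  qed
  moreover have "x = c + (1 + t) *\<^sub>R (y - c)"
    using assms by (simp add: y_def)
  ultimately have "x \<in> (\<lambda>x. c + (1 + t) *\<^sub>R (x - c)) ` A"
    unfolding A_def by (intro image_eqI[of _ _ y]) auto
  moreover have "x \<notin> (\<lambda>x. c + (1 - t) *\<^sub>R (x - c)) ` A"
  proof
    assume "x \<in> (\<lambda>x. c + (1 - t) *\<^sub>R (x - c)) ` A"
    then obtain y' where "y' \<in> E" "x = c + (1 - t) *\<^sub>R (y' - c)"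
      unfolding A_def by blast
    then have "cball x (t * r) \<subseteq> E"
      using assms convex_homothety_cball_subset by blast
    then show False
      using not_inside by blast
  qed
  ultimately show "x \<in> (\<lambda>x. c + (1 + t) *\<^sub>R (x - c)) ` A - (\<lambda>x. c + (1 - t) *\<^sub>R (x - c)) ` A"
    by blast
qed

lemma power_Suc_diff_le:
  fixes a b :: real
  assumes "0 \<le> b" "b \<le> a"
  shows "a ^ Suc n - b ^ Suc n \<le> real (Suc n) * (a - b) * a ^ n"
proof (induction n)
  case 0
  then show ?case
    by simp
next
  case (Suc n)
  have "a ^ Suc (Suc n) - b ^ Suc (Suc n) = a * (a ^ Suc n - b ^ Suc n) + (a - b) * b ^ Suc n"
    by (simp add: algebra_simps)
  also have "\<dots> \<le> a * (real (Suc n) * (a - b) * a ^ n) + (a - b) * a ^ Suc n"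
    using assms Suc by (intro add_mono mult_left_mono power_mono) auto
  also have "\<dots> = real (Suc (Suc n)) * (a - b) * a ^ Suc n"
    by (simp add: algebra_simps)
  finally show ?case .
qed

lemma one_plus_power_diff_le:
  fixes t :: real
  assumes "0 \<le> t" "t \<le> 1"
  shows "(1 + t) ^ n - (1 - t) ^ n \<le> 2 * real n * 2 ^ n * t"
proof (cases n)
  case 0
  then show ?thesis
    by simp
next
  case (Suc k)
  have "(1 + t) ^ n - (1 - t) ^ n \<le> real n * (2 * t) * (1 + t) ^ k"
    using power_Suc_diff_le[of "1 - t" "1 + t" k] assms Suc by simp
  also have "\<dots> \<le> real n * (2 * t) * 2 ^ n"
  proof -
    have "(1 + t) ^ k \<le> 2 ^ k"
      using assms by (intro power_mono) auto
    also have "(2::real) ^ k \<le> 2 ^ n"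
      using Suc by (intro power_increasing) auto
    finally show ?thesis
      using assms by (intro mult_left_mono) auto
  qed
  finally show ?thesis
    by (simp add: algebra_simps)
qed

lemma emeasure_boundary_layer_le_of_cball:
  fixes E :: "'a::euclidean_space set"
  assumes "convex E" "closed E" "cball c r \<subseteq> E" "r > 0"
  obtains K where "\<And>\<delta>. 0 \<le> \<delta> \<Longrightarrow> \<delta> \<le> r \<Longrightarrow>
    emeasure lebesgue (cball 0 R \<inter> boundary_layer E \<delta>) \<le> ennreal (K * \<delta>)"
proof -
  define A where "A = E \<inter> cball c (\<bar>R\<bar> + norm c)"
  define m where "m = measure lebesgue A"
  define N where "N = DIM('a)"
  have A: "compact A" "convex A" "c \<in> A"
    using assms by (auto simp: A_def intro: closed_Int_compact convex_Int)
  have "emeasure lebesgue (cball 0 R \<inter> boundary_layer E \<delta>) \<le> ennreal (2 * real N * 2 ^ N * m / r * \<delta>)"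
    if \<delta>: "0 \<le> \<delta>" "\<delta> \<le> r" for \<delta>
  proof -
    define t where "t = \<delta> / r"
    have t: "0 \<le> t" "t \<le> 1" "\<delta> = t * r"
      using \<delta> assms by (auto simp: t_def)
    define P where "P = (\<lambda>x. c + (1 + t) *\<^sub>R (x - c)) ` A"
    define Q where "Q = (\<lambda>x. c + (1 - t) *\<^sub>R (x - c)) ` A"
    have PQ: "P \<in> lmeasurable" "Q \<in> lmeasurable"
      unfolding P_def Q_def using A by (auto intro!: lmeasurable_compact compact_continuous_image continuous_intros)
    moreover have "Q \<subseteq> P"
      unfolding P_def Q_def using A t by (intro convex_homothety_image_mono) auto
    ultimately have "measure lebesgue (P - Q) = measure lebesgue P - measure lebesgue Q"
      by (intro measure_Diff) (auto simp: fmeasurable_def)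
    also have "\<dots> = ((1 + t) ^ N - (1 - t) ^ N) * m"
      unfolding P_def Q_def measure_lebesgue_homothety using t by (simp add: m_def N_def algebra_simps)
    also have "\<dots> \<le> 2 * real N * 2 ^ N * t * m"
      using one_plus_power_diff_le[OF t(1,2)] by (intro mult_right_mono) (auto simp: m_def)
    also have "\<dots> = 2 * real N * 2 ^ N * m / r * \<delta>"
      using assms by (simp add: t_def)
    finally have measure_PQ: "measure lebesgue (P - Q) \<le> 2 * real N * 2 ^ N * m / r * \<delta>" .
    have "cball 0 R \<inter> boundary_layer E \<delta> \<subseteq> P - Q"
      unfolding P_def Q_def A_def t(3) using assms t by (intro boundary_layer_subset_homothety_diff) auto
    then have "emeasure lebesgue (cball 0 R \<inter> boundary_layer E \<delta>) \<le> emeasure lebesgue (P - Q)"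
      using PQ by (intro emeasure_mono) auto
    also have "\<dots> = ennreal (measure lebesgue (P - Q))"
      using PQ by (intro emeasure_eq_measure2) auto
    also have "\<dots> \<le> ennreal (2 * real N * 2 ^ N * m / r * \<delta>)"
      using measure_PQ by (rule ennreal_leI)
    finally show ?thesis .
  qed
  then show ?thesis
    using that by blast
qed

lemma boundary_layer_subset_halfspace:
  fixes E :: "'a::real_inner set"
  assumes E: "E \<subseteq> {x. a \<bullet> x = b}" and a: "a \<noteq> 0"
  shows "boundary_layer E \<delta> \<subseteq> boundary_layer {x. a \<bullet> x \<le> b} (2 * \<delta>)"
proof
  fix x
  assume "x \<in> boundary_layer E \<delta>"
  then obtain z where z: "z \<in> E" "dist x z \<le> \<delta>"
    by (auto simp: boundary_layer_def)
  have "\<delta> > 0"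
    using \<open>x \<in> boundary_layer E \<delta>\<close> boundary_layer_nonpos[of \<delta> E] by force
  have az: "a \<bullet> z = b"
    using E z by auto
  define v where "v = x + (2 * \<delta> / norm a) *\<^sub>R a"
  have "v \<in> cball x (2 * \<delta>)"
    using a \<open>\<delta> > 0\<close> by (simp add: v_def dist_norm)
  moreover have "a \<bullet> v > b"
  proof -
    have "a \<bullet> (z - x) \<le> norm a * norm (z - x)"
      by (rule norm_cauchy_schwarz)
    also have "\<dots> \<le> norm a * \<delta>"
      using z by (intro mult_left_mono) (auto simp: dist_norm norm_minus_commute)
    finally have "a \<bullet> z - norm a * \<delta> \<le> a \<bullet> x"
      by (simp add: inner_diff_right)
    moreover have "a \<bullet> v = a \<bullet> x + 2 * (norm a * \<delta>)"
      using a by (simp add: v_def inner_add_right power2_norm_eq_inner[symmetric] power2_eq_square)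
    moreover have "norm a * \<delta> > 0"
      using a \<open>\<delta> > 0\<close> by simp
    ultimately show ?thesis
      using az by linarith
  qed
  ultimately have "\<not> cball x (2 * \<delta>) \<subseteq> {x. a \<bullet> x \<le> b}"
    by auto
  moreover have "dist x z \<le> 2 * \<delta>" "z \<in> {x. a \<bullet> x \<le> b}"
    using z az \<open>\<delta> > 0\<close> by auto
  ultimately show "x \<in> boundary_layer {x. a \<bullet> x \<le> b} (2 * \<delta>)"
    by (auto simp: boundary_layer_def)
qed

lemma cball_subset_halfspace:
  fixes a :: "'a::real_inner"
  assumes "a \<noteq> 0"
  shows "cball (((b - norm a) / (a \<bullet> a)) *\<^sub>R a) 1 \<subseteq> {x. a \<bullet> x \<le> b}"
proof
  fix x
  define c where "c = ((b - norm a) / (a \<bullet> a)) *\<^sub>R a"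
  assume "x \<in> cball c 1"
  then have "norm (x - c) \<le> 1"
    by (simp add: dist_norm norm_minus_commute)
  have "a \<bullet> x = a \<bullet> c + a \<bullet> (x - c)"
    by (simp add: inner_diff_right)
  also have "a \<bullet> (x - c) \<le> norm a * norm (x - c)"
    by (rule norm_cauchy_schwarz)
  also have "\<dots> \<le> norm a"
    using \<open>norm (x - c) \<le> 1\<close> by (simp add: mult_left_le)
  also have "a \<bullet> c = b - norm a"
    using assms by (simp add: c_def)
  finally show "x \<in> {x. a \<bullet> x \<le> b}"
    by simp
qed

lemma emeasure_boundary_layer_le:
  fixes E :: "'a::euclidean_space set"
  assumes "convex E" "closed E"
  obtains \<delta>\<^sub>0 K where "\<delta>\<^sub>0 > 0" "\<And>\<delta>. 0 \<le> \<delta> \<Longrightarrow> \<delta> \<le> \<delta>\<^sub>0 \<Longrightarrow>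
    emeasure lebesgue (cball 0 R \<inter> boundary_layer E \<delta>) \<le> ennreal (K * \<delta>)"
proof (cases "interior E = {}")
  case False
  then obtain c e where "e > 0" "ball c e \<subseteq> E"
    by (meson ex_in_conv mem_interior)
  then have "cball c (e / 2) \<subseteq> E"
    by (intro order_trans[OF _ \<open>ball c e \<subseteq> E\<close>]) (simp add: cball_subset_ball_iff)
  then show ?thesis
    using emeasure_boundary_layer_le_of_cball[OF assms] \<open>e > 0\<close> that by (metis half_gt_zero)
next
  case True
  then obtain a b where a: "a \<noteq> 0" "E \<subseteq> {x. a \<bullet> x = b}"
    using empty_interior_subset_hyperplane[OF assms(1)] by blast
  define H where "H = {x. a \<bullet> x \<le> b}"
  have H: "convex H" "closed H"
    unfolding H_def by (auto intro: convex_halfspace_le closed_halfspace_le)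
  obtain K where K: "\<And>\<delta>. 0 \<le> \<delta> \<Longrightarrow> \<delta> \<le> 1 \<Longrightarrow>
      emeasure lebesgue (cball 0 R \<inter> boundary_layer H \<delta>) \<le> ennreal (K * \<delta>)"
    using emeasure_boundary_layer_le_of_cball[OF H cball_subset_halfspace[OF a(1), of b, folded H_def]] by auto
  have "emeasure lebesgue (cball 0 R \<inter> boundary_layer E \<delta>) \<le> ennreal (2 * K * \<delta>)"
    if "0 \<le> \<delta>" "\<delta> \<le> 1 / 2" for \<delta>
  proof -
    have "cball 0 R \<inter> boundary_layer H (2 * \<delta>) \<in> sets lebesgue"
      using boundary_layer_borel[OF H(2), of "2 * \<delta>"] that by auto
    then have "emeasure lebesgue (cball 0 R \<inter> boundary_layer E \<delta>)
        \<le> emeasure lebesgue (cball 0 R \<inter> boundary_layer H (2 * \<delta>))"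
      using boundary_layer_subset_halfspace[OF a(2,1)] unfolding H_def by (intro emeasure_mono) auto
    also have "\<dots> \<le> ennreal (2 * K * \<delta>)"
      using K[of "2 * \<delta>"] that by (simp add: mult_ac)
    finally show ?thesis .
  qed
  then show ?thesis
    using that[of "1 / 2" "2 * K"] by simp
qed

section \<open>Blocks\<close>

lemma bproj_add: "bproj blk j (x + y) = bproj blk j x + bproj blk j y"
  by (simp add: bproj_def vec_eq_iff)

lemma bproj_diff: "bproj blk j (x - y) = bproj blk j x - bproj blk j y"
  by (simp add: bproj_def vec_eq_iff)

lemma bproj_bproj: "bproj blk j (bproj blk j x) = bproj blk j x"
  by (simp add: bproj_def vec_eq_iff)

lemma linear_bproj: "linear (bproj blk j)"
  by (rule linearI) (auto simp: bproj_def vec_eq_iff)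

lemma isCont_bproj: "isCont (bproj blk j) x"
  using linear_bproj by (intro linear_continuous_at) (simp add: linear_conv_bounded_linear)

lemma sum_bproj: "(\<Sum>j\<in>(UNIV::'d::finite set). bproj blk j x) = x"
  by (simp add: bproj_def vec_eq_iff sum.delta)

definition block_cylinder :: "('n::finite \<Rightarrow> 'd) \<Rightarrow> ('d \<Rightarrow> (real^'n) set) \<Rightarrow> 'd \<Rightarrow> (real^'n) set" where
  "block_cylinder blk D j = bproj blk j -` D j"

definition block_boundary_layer ::
    "('n::finite \<Rightarrow> 'd) \<Rightarrow> ('d \<Rightarrow> (real^'n) set) \<Rightarrow> real \<Rightarrow> real \<Rightarrow> (real^'n) set" where
  "block_boundary_layer blk D \<epsilon> \<delta> = enlarged blk D \<epsilon> \<inter> (\<Union>j. boundary_layer (block_cylinder blk D j) \<delta>)"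

lemma closed_block_cylinder: "closed (D j) \<Longrightarrow> closed (block_cylinder blk D j)"
  unfolding block_cylinder_def by (rule continuous_closed_vimage) (simp_all add: isCont_bproj)

lemma convex_block_cylinder: "convex (D j) \<Longrightarrow> convex (block_cylinder blk D j)"
  unfolding block_cylinder_def by (rule convex_linear_vimage[OF linear_bproj])

lemma prod_blocks_eq_INT: "prod_blocks blk D = (\<Inter>j. block_cylinder blk D j)"
  by (auto simp: prod_blocks_def block_cylinder_def)

lemma closed_prod_blocks: "(\<And>j. closed (D j)) \<Longrightarrow> closed (prod_blocks blk D)"
  by (simp add: prod_blocks_eq_INT closed_INT closed_block_cylinder)

lemma closed_enlarged:
  assumes "\<And>j. closed (D j)" "0 \<le> \<epsilon>"
  shows "closed (enlarged blk D \<epsilon>)"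
proof -
  have "enlarged blk D \<epsilon> = (\<Inter>j. bproj blk j -` {x. \<exists>z\<in>D j. dist x z \<le> \<epsilon>})"
    by (auto simp: enlarged_def dist_norm)
  moreover have "closed (bproj blk j -` {x. \<exists>z\<in>D j. dist x z \<le> \<epsilon>})" for j
    using closed_thickening[OF assms(1) assms(2)]
    by (rule continuous_closed_vimage) (simp_all add: isCont_bproj)
  ultimately show ?thesis
    by auto
qed

lemma enlarged_subset_cball:
  fixes blk :: "'n::finite \<Rightarrow> 'd::finite"
  assumes "\<And>j. bounded (D j)"
  obtains R where "enlarged blk D \<epsilon> \<subseteq> cball 0 R"
proof -
  obtain B where B: "\<And>j y. y \<in> D j \<Longrightarrow> norm y \<le> B j"
    using assms unfolding bounded_iff by metis
  have "norm x \<le> (\<Sum>j\<in>UNIV. B j + \<epsilon>)" if x: "x \<in> enlarged blk D \<epsilon>" for x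
  proof -
    have "norm (bproj blk j x) \<le> B j + \<epsilon>" for j
    proof -
      obtain y where "y \<in> D j" "norm (bproj blk j x - y) \<le> \<epsilon>"
        using x by (auto simp: enlarged_def)
      then show ?thesis
        using B[of y j] norm_triangle_ineq2[of "bproj blk j x" y] by simp
    qed
    then have "(\<Sum>j\<in>UNIV. norm (bproj blk j x)) \<le> (\<Sum>j\<in>UNIV. B j + \<epsilon>)"
      by (intro sum_mono)
    moreover have "norm x \<le> (\<Sum>j\<in>UNIV. norm (bproj blk j x))"
      using norm_sum[of "\<lambda>j. bproj blk j x" UNIV] by (simp add: sum_bproj)
    ultimately show ?thesis
      by linarith
  qed
  then have "enlarged blk D \<epsilon> \<subseteq> cball 0 (\<Sum>j\<in>UNIV. B j + \<epsilon>)"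
    by auto
  then show ?thesis
    by (rule that)
qed

lemma block_boundary_layer_borel:
  fixes blk :: "'n::finite \<Rightarrow> 'd::finite"
  assumes "\<And>j. closed (D j)" "0 \<le> \<epsilon>" "0 \<le> \<delta>"
  shows "block_boundary_layer blk D \<epsilon> \<delta> \<in> sets borel"
proof -
  have "enlarged blk D \<epsilon> \<in> sets borel"
    using assms by (intro borel_closed closed_enlarged) auto
  moreover have "boundary_layer (block_cylinder blk D j) \<delta> \<in> sets borel" for j
    using assms by (intro boundary_layer_borel closed_block_cylinder)
  then have "(\<Union>j. boundary_layer (block_cylinder blk D j) \<delta>) \<in> sets borel"
    by (intro sets.countable_UN') auto
  ultimately show ?thesis
    by (simp add: block_boundary_layer_def)
qed

lemma bproj_replace_block:
  shows "bproj blk j (x + bproj blk j (y - x)) = bproj blk j y"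
    and "dist x (x + bproj blk j (y - x)) = norm (bproj blk j y - bproj blk j x)"
  by (simp_all add: bproj_add bproj_diff bproj_bproj dist_norm norm_minus_commute)

lemma mem_block_boundary_layer_of_leaving:
  assumes "x \<in> prod_blocks blk D" "y \<notin> prod_blocks blk D" "0 \<le> \<delta>" "\<delta> \<le> \<epsilon>"
    and close: "\<And>j. norm (bproj blk j y - bproj blk j x) \<le> \<delta>"
  shows "x \<in> block_boundary_layer blk D \<epsilon> \<delta>"
proof -
  obtain j where "bproj blk j y \<notin> D j"
    using assms(2) by (auto simp: prod_blocks_def)
  then have "x + bproj blk j (y - x) \<notin> block_cylinder blk D j"
    by (simp add: block_cylinder_def bproj_replace_block)
  moreover have "x + bproj blk j (y - x) \<in> cball x \<delta>"
    using close[of j] by (simp add: bproj_replace_block)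
  ultimately have "\<not> cball x \<delta> \<subseteq> block_cylinder blk D j"
    by blast
  moreover have "x \<in> block_cylinder blk D j"
    using assms(1) by (simp add: prod_blocks_def block_cylinder_def)
  moreover have "x \<in> enlarged blk D \<epsilon>"
    using assms unfolding prod_blocks_def enlarged_def by (auto intro!: bexI[of _ "bproj blk _ x"])
  ultimately show ?thesis
    using assms(3) by (auto simp: block_boundary_layer_def boundary_layer_def intro!: exI[of _ j] bexI[of _ x])
qed

lemma mem_block_boundary_layer_of_entering:
  assumes "x \<notin> prod_blocks blk D" "y \<in> prod_blocks blk D" "0 \<le> \<delta>" "\<delta> \<le> \<epsilon>"
    and close: "\<And>j. norm (bproj blk j y - bproj blk j x) \<le> \<delta>"
  shows "x \<in> block_boundary_layer blk D \<epsilon> \<delta>"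
proof -
  obtain j where "bproj blk j x \<notin> D j"
    using assms(1) by (auto simp: prod_blocks_def)
  then have "\<not> cball x \<delta> \<subseteq> block_cylinder blk D j"
    using assms(3) centre_in_cball[of x \<delta>] unfolding block_cylinder_def by blast
  moreover have "x + bproj blk j (y - x) \<in> block_cylinder blk D j"
    using assms(2) by (simp add: block_cylinder_def bproj_replace_block prod_blocks_def)
  moreover have "x \<in> enlarged blk D \<epsilon>"
    unfolding enlarged_def
  proof (intro CollectI allI)
    fix k
    have "norm (bproj blk k x - bproj blk k y) \<le> \<epsilon>"
      using close[of k] assms(4) by (simp add: norm_minus_commute)
    then show "\<exists>z\<in>D k. norm (bproj blk k x - z) \<le> \<epsilon>"
      using assms(2) by (auto simp: prod_blocks_def)
  qed
  moreover have "dist x (x + bproj blk j (y - x)) \<le> \<delta>"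
    using close[of j] by (simp add: bproj_replace_block)
  ultimately show ?thesis
    unfolding block_boundary_layer_def boundary_layer_def by blast
qed

lemma indicator_prod_blocks_diff_le:
  assumes "0 \<le> \<delta>" "\<delta> \<le> \<epsilon>" and "\<And>j. norm (bproj blk j y - bproj blk j x) \<le> \<delta>"
  shows "\<bar>indicator (prod_blocks blk D) y - indicator (prod_blocks blk D) x\<bar>
           \<le> (indicator (block_boundary_layer blk D \<epsilon> \<delta>) x :: real)"
  using mem_block_boundary_layer_of_leaving[OF _ _ assms] mem_block_boundary_layer_of_entering[OF _ _ assms]
  by (cases "x \<in> prod_blocks blk D"; cases "y \<in> prod_blocks blk D") (auto simp: indicator_def)

lemma sum_le_linear_of_each_le_linear:
  fixes f :: "'j::finite \<Rightarrow> real \<Rightarrow> ennreal"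
  assumes "\<And>j. \<exists>\<delta>\<^sub>0 K. \<delta>\<^sub>0 > 0 \<and> (\<forall>\<delta>. 0 \<le> \<delta> \<longrightarrow> \<delta> \<le> \<delta>\<^sub>0 \<longrightarrow> f j \<delta> \<le> ennreal (K * \<delta>))"
  obtains \<delta>\<^sub>0 K where "\<delta>\<^sub>0 > 0" "K \<ge> 0" "\<And>\<delta>. 0 \<le> \<delta> \<Longrightarrow> \<delta> \<le> \<delta>\<^sub>0 \<Longrightarrow> (\<Sum>j\<in>UNIV. f j \<delta>) \<le> ennreal (K * \<delta>)"
proof -
  obtain d k where d: "\<And>j. d j > 0"
    and k: "\<And>j \<delta>. 0 \<le> \<delta> \<Longrightarrow> \<delta> \<le> d j \<Longrightarrow> f j \<delta> \<le> ennreal (k j * \<delta>)"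
    using assms by metis
  define \<delta>\<^sub>0 where "\<delta>\<^sub>0 = Min (range d)"
  define K where "K = (\<Sum>j\<in>UNIV. \<bar>k j\<bar>)"
  have "(\<Sum>j\<in>UNIV. f j \<delta>) \<le> ennreal (K * \<delta>)" if \<delta>: "0 \<le> \<delta>" "\<delta> \<le> \<delta>\<^sub>0" for \<delta>
  proof -
    have "f j \<delta> \<le> ennreal (\<bar>k j\<bar> * \<delta>)" for j
    proof -
      have "\<delta> \<le> d j"
        using \<delta> by (auto simp: \<delta>\<^sub>0_def intro: order_trans[OF _ Min_le])
      then have "f j \<delta> \<le> ennreal (k j * \<delta>)"
        using k \<delta> by blast
      also have "\<dots> \<le> ennreal (\<bar>k j\<bar> * \<delta>)"
        using \<delta> by (intro ennreal_leI mult_right_mono) auto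
      finally show ?thesis .
    qed
    then have "(\<Sum>j\<in>UNIV. f j \<delta>) \<le> (\<Sum>j\<in>UNIV. ennreal (\<bar>k j\<bar> * \<delta>))"
      by (intro sum_mono)
    also have "\<dots> = ennreal (K * \<delta>)"
      using \<delta> by (simp add: K_def sum_distrib_right)
    finally show ?thesis .
  qed
  moreover have "\<delta>\<^sub>0 > 0"
    unfolding \<delta>\<^sub>0_def using d by (subst Min_gr_iff) auto
  moreover have "K \<ge> 0"
    unfolding K_def by (simp add: sum_nonneg)
  ultimately show ?thesis
    using that by blast
qed

lemma emeasure_block_boundary_layer_le:
  fixes blk :: "'n::finite \<Rightarrow> 'd::finite"
  assumes compact: "\<And>j. compact (D j)" and convex: "\<And>j. convex (D j)"
  obtains \<delta>\<^sub>0 K where "\<delta>\<^sub>0 > 0" "K \<ge> 0" "\<And>\<delta>. 0 \<le> \<delta> \<Longrightarrow> \<delta> \<le> \<delta>\<^sub>0 \<Longrightarrow>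
    emeasure lebesgue (block_boundary_layer blk D \<epsilon> \<delta>) \<le> ennreal (K * \<delta>)"
proof -
  obtain R where R: "enlarged blk D \<epsilon> \<subseteq> cball 0 R"
    using enlarged_subset_cball[of D blk \<epsilon>] compact by (blast intro: compact_imp_bounded)
  define S where "S j \<delta> = cball 0 R \<inter> boundary_layer (block_cylinder blk D j) \<delta>" for j \<delta>
  have closed: "closed (block_cylinder blk D j)" for j
    using compact by (intro closed_block_cylinder compact_imp_closed)
  have "\<exists>\<delta>\<^sub>0 K. \<delta>\<^sub>0 > 0 \<and> (\<forall>\<delta>. 0 \<le> \<delta> \<longrightarrow> \<delta> \<le> \<delta>\<^sub>0 \<longrightarrow> emeasure lebesgue (S j \<delta>) \<le> ennreal (K * \<delta>))" for j
    using emeasure_boundary_layer_le[OF convex_block_cylinder[of D j, OF convex] closed, of R]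
    unfolding S_def by metis
  then obtain \<delta>\<^sub>0 K where \<delta>\<^sub>0: "\<delta>\<^sub>0 > 0" and K: "K \<ge> 0"
    and S_le: "\<And>\<delta>. 0 \<le> \<delta> \<Longrightarrow> \<delta> \<le> \<delta>\<^sub>0 \<Longrightarrow> (\<Sum>j\<in>UNIV. emeasure lebesgue (S j \<delta>)) \<le> ennreal (K * \<delta>)"
    using sum_le_linear_of_each_le_linear[where f = "\<lambda>j \<delta>. emeasure lebesgue (S j \<delta>)"] by blast
  have layer_le: "emeasure lebesgue (block_boundary_layer blk D \<epsilon> \<delta>) \<le> (\<Sum>j\<in>UNIV. emeasure lebesgue (S j \<delta>))"
    if "0 \<le> \<delta>" for \<delta>
  proof -
    have S_sets: "S j \<delta> \<in> sets lebesgue" for j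
      using boundary_layer_borel[OF closed that] by (simp add: S_def)
    have "block_boundary_layer blk D \<epsilon> \<delta> \<subseteq> (\<Union>j. S j \<delta>)"
      using R by (auto simp: block_boundary_layer_def S_def)
    then have "emeasure lebesgue (block_boundary_layer blk D \<epsilon> \<delta>) \<le> emeasure lebesgue (\<Union>j. S j \<delta>)"
      using S_sets by (intro emeasure_mono) auto
    also have "\<dots> \<le> (\<Sum>j\<in>UNIV. emeasure lebesgue (S j \<delta>))"
      using S_sets by (intro emeasure_subadditive_finite) auto
    finally show ?thesis .
  qed
  show ?thesis
  proof (rule that[OF \<delta>\<^sub>0 K])
    show "emeasure lebesgue (block_boundary_layer blk D \<epsilon> \<delta>) \<le> ennreal (K * \<delta>)"
      if "0 \<le> \<delta>" "\<delta> \<le> \<delta>\<^sub>0" for \<delta>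
      using layer_le[OF that(1)] S_le[OF that] by (rule order_trans)
  qed
qed

lemma emeasure_density_le_bound:
  fixes p :: "'a::euclidean_space \<Rightarrow> real"
  assumes p: "(\<lambda>x. ennreal (p x)) \<in> borel_measurable lborel"
    and T: "T \<in> sets borel" "T \<subseteq> S" and B: "\<And>x. x \<in> S \<Longrightarrow> \<bar>p x\<bar> \<le> B"
  shows "emeasure (density lborel (\<lambda>x. ennreal (p x))) T \<le> ennreal B * emeasure lebesgue T"
proof -
  have "emeasure (density lborel (\<lambda>x. ennreal (p x))) T = (\<integral>\<^sup>+ x. ennreal (p x) * indicator T x \<partial>lborel)"
    using T p by (intro emeasure_density) auto
  also have "\<dots> \<le> (\<integral>\<^sup>+ x. ennreal B * indicator T x \<partial>lborel)"
  proof (rule nn_integral_mono)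
    fix x
    show "ennreal (p x) * indicator T x \<le> ennreal B * indicator T x"
      using B T by (cases "x \<in> T") (auto intro!: ennreal_leI simp: abs_le_iff)
  qed
  also have "\<dots> = ennreal B * emeasure lborel T"
    using T by (intro nn_integral_cmult_indicator) auto
  also have "emeasure lborel T = emeasure lebesgue T"
    using T by simp
  finally show ?thesis .
qed

lemma measure_block_boundary_layer_le:
  fixes blk :: "'n::finite \<Rightarrow> 'd::finite" and p :: "real^'n \<Rightarrow> real"
  assumes compact: "\<And>j. compact (D j)" and convex: "\<And>j. convex (D j)" and \<epsilon>: "\<epsilon> > 0"
    and p: "(\<lambda>x. ennreal (p x)) \<in> borel_measurable lborel"
    and B: "\<And>x. x \<in> enlarged blk D \<epsilon> \<Longrightarrow> \<bar>p x\<bar> \<le> B"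
  obtains \<delta>\<^sub>0 K where "0 < \<delta>\<^sub>0" "\<delta>\<^sub>0 \<le> \<epsilon>" "\<And>\<delta>. 0 \<le> \<delta> \<Longrightarrow> \<delta> \<le> \<delta>\<^sub>0 \<Longrightarrow>
    measure (density lborel (\<lambda>x. ennreal (p x))) (block_boundary_layer blk D \<epsilon> \<delta>) \<le> K * \<delta>"
proof -
  obtain \<delta>\<^sub>0 K where \<delta>\<^sub>0: "\<delta>\<^sub>0 > 0" and K: "K \<ge> 0"
    and layer: "\<And>\<delta>. 0 \<le> \<delta> \<Longrightarrow> \<delta> \<le> \<delta>\<^sub>0 \<Longrightarrow> emeasure lebesgue (block_boundary_layer blk D \<epsilon> \<delta>) \<le> ennreal (K * \<delta>)"
    using emeasure_block_boundary_layer_le[where D = D and blk = blk and \<epsilon> = \<epsilon>, OF compact convex] by blast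
  have B0: "0 \<le> max B 0" "\<And>x. x \<in> enlarged blk D \<epsilon> \<Longrightarrow> \<bar>p x\<bar> \<le> max B 0"
    using B by (auto intro: max.coboundedI1)
  have "measure (density lborel (\<lambda>x. ennreal (p x))) (block_boundary_layer blk D \<epsilon> \<delta>) \<le> max B 0 * K * \<delta>"
    if \<delta>: "0 \<le> \<delta>" "\<delta> \<le> min \<delta>\<^sub>0 \<epsilon>" for \<delta>
  proof -
    have "emeasure (density lborel (\<lambda>x. ennreal (p x))) (block_boundary_layer blk D \<epsilon> \<delta>)
        \<le> ennreal (max B 0) * emeasure lebesgue (block_boundary_layer blk D \<epsilon> \<delta>)"
    proof (rule emeasure_density_le_bound[OF p _ _ B0(2)])
      show "block_boundary_layer blk D \<epsilon> \<delta> \<in> sets borel"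
        using compact \<epsilon> \<delta> by (intro block_boundary_layer_borel compact_imp_closed) auto
    qed (auto simp: block_boundary_layer_def)
    also have "\<dots> \<le> ennreal (max B 0) * ennreal (K * \<delta>)"
      using layer[of \<delta>] \<delta> by (intro mult_left_mono) auto
    also have "\<dots> = ennreal (max B 0 * K * \<delta>)"
      using K \<delta> by (simp add: ennreal_mult' mult.assoc)
    finally show ?thesis
      unfolding measure_def using K \<delta> B0(1) by (intro enn2real_leI) auto
  qed
  moreover have "0 < min \<delta>\<^sub>0 \<epsilon>"
    using \<delta>\<^sub>0 \<epsilon> by simp
  ultimately show ?thesis
    using that[of "min \<delta>\<^sub>0 \<epsilon>" "max B 0 * K"] by (simp only: min.cobounded2)
qed

lemma borel_measurable_bproj [measurable]: "bproj blk j \<in> borel_measurable borel"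
  by (intro borel_measurable_continuous_onI continuous_at_imp_continuous_on) (simp add: isCont_bproj)

lemma borel_measurable_Max_insert_0:
  fixes f :: "'i \<Rightarrow> 'a \<Rightarrow> real"
  assumes "finite I" "\<And>i. i \<in> I \<Longrightarrow> f i \<in> borel_measurable M"
  shows "(\<lambda>\<omega>. Max (insert 0 ((\<lambda>i. f i \<omega>) ` I))) \<in> borel_measurable M"
proof (cases "I = {}")
  case True
  then show ?thesis
    by simp
next
  case False
  then have "(\<lambda>\<omega>. Max (insert 0 ((\<lambda>i. f i \<omega>) ` I))) = (\<lambda>\<omega>. max 0 (Max ((\<lambda>i. f i \<omega>) ` I)))"
    using assms(1) by (simp add: Max_insert)
  then show ?thesis
    using assms by (simp add: borel_measurable_Max)
qed

definition max_block_displacement ::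
    "('n::finite \<Rightarrow> 'd) \<Rightarrow> 'd \<Rightarrow> nat \<Rightarrow> (nat \<Rightarrow> real^'n) \<Rightarrow> (nat \<Rightarrow> real^'n) \<Rightarrow> real" where
  "max_block_displacement blk j n y x = Max (insert 0 ((\<lambda>i. norm (bproj blk j (y i) - bproj blk j (x i))) ` {..<n}))"

lemma max_block_displacement_nonneg: "0 \<le> max_block_displacement blk j n y x"
  by (simp add: max_block_displacement_def)

lemma norm_bproj_diff_le_max_block_displacement:
  "i < n \<Longrightarrow> norm (bproj blk j (y i) - bproj blk j (x i)) \<le> max_block_displacement blk j n y x"
  by (simp add: max_block_displacement_def)

lemma borel_measurable_max_block_displacement:
  assumes "\<And>i. Y i \<in> borel_measurable M" "\<And>i. X i \<in> borel_measurable M"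
  shows "(\<lambda>\<omega>. max_block_displacement blk j n (\<lambda>i. Y i \<omega>) (\<lambda>i. X i \<omega>)) \<in> borel_measurable M"
  unfolding max_block_displacement_def using assms by (intro borel_measurable_Max_insert_0) auto

lemma indicator_prod_blocks_diff_le_displacement:
  fixes blk :: "'n::finite \<Rightarrow> 'd::finite"
  assumes "i < n" "(\<Sum>j\<in>UNIV. max_block_displacement blk j n y x) \<le> \<delta>" "\<delta> \<le> \<epsilon>"
  shows "\<bar>indicator (prod_blocks blk D) (y i) - indicator (prod_blocks blk D) (x i)\<bar>
           \<le> (indicator (block_boundary_layer blk D \<epsilon> \<delta>) (x i) :: real)"
proof (rule indicator_prod_blocks_diff_le)
  have "0 \<le> (\<Sum>j\<in>UNIV. max_block_displacement blk j n y x)"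
    by (simp add: sum_nonneg max_block_displacement_nonneg)
  then show "0 \<le> \<delta>" "\<delta> \<le> \<epsilon>"
    using assms by auto
  fix j
  have "norm (bproj blk j (y i) - bproj blk j (x i)) \<le> max_block_displacement blk j n y x"
    using assms(1) by (rule norm_bproj_diff_le_max_block_displacement)
  also have "\<dots> \<le> (\<Sum>j\<in>UNIV. max_block_displacement blk j n y x)"
    by (intro member_le_sum max_block_displacement_nonneg) auto
  finally show "norm (bproj blk j (y i) - bproj blk j (x i)) \<le> \<delta>"
    using assms(2) by linarith
qed

section \<open>Empirical frequencies and stochastic boundedness\<close>

lemma (in prob_space) prob_eq_measure_distr:
  assumes "X \<in> measurable M N" "distr M N X = P" "A \<in> sets N"
  shows "prob {\<omega> \<in> space M. X \<omega> \<in> A} = measure P A"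
  using assms by (auto simp: measure_distr vimage_def Int_def conj_commute)

lemma (in prob_space) centered_indicator_moments:
  assumes X: "X \<in> measurable M N" and law: "distr M N X = P" and A: "A \<in> sets N"
  defines "Z \<equiv> \<lambda>\<omega>. indicator A (X \<omega>) - measure P A"
  shows "\<And>\<omega>. \<bar>Z \<omega>\<bar> \<le> 1" and "expectation Z = 0" and "expectation (\<lambda>\<omega>. Z \<omega> * Z \<omega>) \<le> measure P A"
proof -
  define q where "q = measure P A"
  have q: "prob {\<omega> \<in> space M. X \<omega> \<in> A} = q"
    unfolding q_def using assms by (intro prob_eq_measure_distr)
  then show "\<bar>Z \<omega>\<bar> \<le> 1" for \<omega>
    by (auto simp: Z_def q_def[symmetric] indicator_def)
  have int: "integrable M (\<lambda>\<omega>. indicator A (X \<omega>) :: real)"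
    using X A by (intro integrable_const_bound[where B = 1]) auto
  have E: "expectation (\<lambda>\<omega>. indicator A (X \<omega>) :: real) = q"
  proof -
    have "expectation (\<lambda>\<omega>. indicator A (X \<omega>) :: real) = expectation (indicator {\<omega> \<in> space M. X \<omega> \<in> A})"
      by (intro Bochner_Integration.integral_cong) (auto simp: indicator_def)
    then show ?thesis
      using q X A by simp
  qed
  then show "expectation Z = 0"
    using int by (simp add: Z_def q_def prob_space)
  have "(\<lambda>\<omega>. Z \<omega> * Z \<omega>) = (\<lambda>\<omega>. (1 - 2 * q) * indicator A (X \<omega>) + q\<^sup>2)"
    by (auto simp: Z_def q_def fun_eq_iff indicator_def power2_eq_square algebra_simps)
  then have "expectation (\<lambda>\<omega>. Z \<omega> * Z \<omega>) = q * (1 - q)"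
    using E int by (simp add: prob_space power2_eq_square algebra_simps)
  also have "\<dots> \<le> q * 1"
    using q by (intro mult_left_mono) auto
  finally show "expectation (\<lambda>\<omega>. Z \<omega> * Z \<omega>) \<le> measure P A"
    by (simp add: q_def)
qed

lemma (in prob_space) expectation_square_sum_uncorrelated:
  fixes Z :: "nat \<Rightarrow> 'a \<Rightarrow> real"
  assumes int: "\<And>i k. integrable M (\<lambda>\<omega>. Z i \<omega> * Z k \<omega>)"
    and uncorr: "\<And>i k. i \<noteq> k \<Longrightarrow> expectation (\<lambda>\<omega>. Z i \<omega> * Z k \<omega>) = 0"
  shows "expectation (\<lambda>\<omega>. (\<Sum>i<n. Z i \<omega>)\<^sup>2) = (\<Sum>i<n. expectation (\<lambda>\<omega>. Z i \<omega> * Z i \<omega>))"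
proof -
  have "expectation (\<lambda>\<omega>. (\<Sum>i<n. Z i \<omega>)\<^sup>2)
      = (\<Sum>i<n. \<Sum>k<n. expectation (\<lambda>\<omega>. Z i \<omega> * Z k \<omega>))"
    by (simp add: power2_eq_square sum_product int)
  also have "\<dots> = (\<Sum>i<n. \<Sum>k\<in>{i}. expectation (\<lambda>\<omega>. Z i \<omega> * Z k \<omega>))"
    by (intro sum.cong refl sum.mono_neutral_right) (auto simp: uncorr)
  finally show ?thesis
    by simp
qed

lemma (in prob_space) indicator_count_moments:
  fixes X :: "nat \<Rightarrow> 'a \<Rightarrow> 'b" and n :: nat
  assumes ind: "indep_vars (\<lambda>_. N) X UNIV" and law: "\<And>i. distr M N (X i) = P" and A: "A \<in> sets N"
  defines "S \<equiv> \<lambda>\<omega>. \<Sum>i<n. indicator A (X i \<omega>) :: real"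
  shows "expectation S = real n * measure P A" and "integrable M (\<lambda>\<omega>. (S \<omega>)\<^sup>2)"
    and "variance S \<le> real n * measure P A"
proof -
  define q where "q = measure P A"
  have X_meas[measurable]: "X i \<in> measurable M N" for i
    using ind unfolding indep_vars_def by auto
  define Z where "Z i \<omega> = indicator A (X i \<omega>) - q" for i \<omega>
  have [measurable]: "Z i \<in> borel_measurable M" for i
    unfolding Z_def using A by measurable
  have moments: "\<bar>Z i \<omega>\<bar> \<le> 1" "expectation (Z i) = 0" "expectation (\<lambda>\<omega>. Z i \<omega> * Z i \<omega>) \<le> q" for i \<omega>
    using centered_indicator_moments[OF X_meas law A] unfolding Z_def q_def by auto
  have int_Z: "integrable M (Z i)" and int_ZZ: "integrable M (\<lambda>\<omega>. Z i \<omega> * Z k \<omega>)" for i k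
    using moments(1) by (auto intro!: integrable_const_bound[where B = 1] simp: abs_mult mult_le_one)
  have "indep_vars (\<lambda>_. borel) Z UNIV"
    unfolding Z_def by (rule indep_vars_compose2[OF ind]) (use A in measurable)
  then have uncorr: "expectation (\<lambda>\<omega>. Z i \<omega> * Z k \<omega>) = 0" if "i \<noteq> k" for i k
    using that indep_vars_lebesgue_integral[of "{i, k}" Z] int_Z moments(2)
      indep_vars_subset[of _ Z UNIV "{i, k}"] by auto
  have S_Z: "S \<omega> = (\<Sum>i<n. Z i \<omega>) + real n * q" for \<omega>
    by (simp add: S_def Z_def sum_subtractf)
  show E_S: "expectation S = real n * measure P A"
    unfolding S_Z by (simp add: int_Z moments(2) prob_space q_def)
  show "integrable M (\<lambda>\<omega>. (S \<omega>)\<^sup>2)"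
    unfolding S_Z power2_eq_square
    by (simp add: distrib_left distrib_right sum_distrib_left sum_distrib_right int_Z int_ZZ)
  have "variance S = expectation (\<lambda>\<omega>. (\<Sum>i<n. Z i \<omega>)\<^sup>2)"
    by (simp add: E_S S_Z q_def)
  also have "\<dots> = (\<Sum>i<n. expectation (\<lambda>\<omega>. Z i \<omega> * Z i \<omega>))"
    using int_ZZ uncorr by (rule expectation_square_sum_uncorrelated)
  also have "\<dots> \<le> real n * q"
    using sum_mono[of "{..<n}", OF moments(3)] by simp
  finally show "variance S \<le> real n * measure P A"
    by (simp add: q_def)
qed

lemma (in prob_space) empirical_frequency_Chebyshev:
  fixes X :: "nat \<Rightarrow> 'a \<Rightarrow> 'b"
  assumes ind: "indep_vars (\<lambda>_. N) X UNIV" and law: "\<And>i. distr M N (X i) = P"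
    and A: "A \<in> sets N" and n: "n > 0" and s: "s > 0"
  shows "prob {\<omega> \<in> space M. s \<le> \<bar>(\<Sum>i<n. indicator A (X i \<omega>)) / real n - measure P A\<bar>}
           \<le> measure P A / (real n * s\<^sup>2)"
proof -
  define S where "S \<omega> = (\<Sum>i<n. indicator A (X i \<omega>) :: real)" for \<omega>
  note moments = indicator_count_moments[OF ind law A, where n = n, folded S_def]
  have [measurable]: "X i \<in> measurable M N" for i
    using ind unfolding indep_vars_def by auto
  note [measurable] = A
  have "{\<omega> \<in> space M. s \<le> \<bar>(\<Sum>i<n. indicator A (X i \<omega>)) / real n - measure P A\<bar>}
      = {\<omega> \<in> space M. real n * s \<le> \<bar>S \<omega> - expectation S\<bar>}"
    using n by (auto simp: moments(1) S_def abs_divide field_simps)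
  also have "prob \<dots> \<le> variance S / (real n * s)\<^sup>2"
    using moments(2) n s unfolding S_def by (intro Chebyshev_inequality) auto
  also have "\<dots> \<le> real n * measure P A / (real n * s)\<^sup>2"
    using moments(3) by (rule divide_right_mono) simp
  also have "\<dots> = measure P A / (real n * s\<^sup>2)"
    using n by (simp add: power2_eq_square)
  finally show ?thesis .
qed

lemma (in prob_space) prob_empirical_frequency_pos_eq_0:
  fixes X :: "nat \<Rightarrow> 'a \<Rightarrow> 'b"
  assumes X: "\<And>i. X i \<in> measurable M N" and law: "\<And>i. distr M N (X i) = P"
    and A: "A \<in> sets N" and null: "measure P A = 0"
  shows "prob {\<omega> \<in> space M. 0 < (\<Sum>i<n. indicator A (X i \<omega>)) / real n} = 0"
proof -
  have "{\<omega> \<in> space M. 0 < (\<Sum>i<n. indicator A (X i \<omega>)) / real n} \<subseteq> (\<Union>i<n. {\<omega> \<in> space M. X i \<omega> \<in> A})"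
  proof
    fix \<omega>
    assume \<omega>: "\<omega> \<in> {\<omega> \<in> space M. 0 < (\<Sum>i<n. indicator A (X i \<omega>)) / real n}"
    then have "(\<Sum>i<n. indicator A (X i \<omega>)) \<noteq> (0::real)"
      by auto
    then obtain i where "i < n" "indicator A (X i \<omega>) \<noteq> (0::real)"
      using sum.not_neutral_contains_not_neutral by blast
    then show "\<omega> \<in> (\<Union>i<n. {\<omega> \<in> space M. X i \<omega> \<in> A})"
      using \<omega> by (auto simp: indicator_def split: if_splits)
  qed
  then have "prob {\<omega> \<in> space M. 0 < (\<Sum>i<n. indicator A (X i \<omega>)) / real n}
      \<le> (\<Sum>i<n. prob {\<omega> \<in> space M. X i \<omega> \<in> A})"
    using X A by (intro order_trans[OF finite_measure_mono finite_measure_subadditive_finite]) auto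
  also have "\<dots> = 0"
    using prob_eq_measure_distr[OF X law A] null by simp
  finally show ?thesis
    by (simp add: antisym)
qed

lemma (in prob_space) prob_empirical_frequency_gt:
  fixes X :: "nat \<Rightarrow> 'a \<Rightarrow> 'b"
  assumes ind: "indep_vars (\<lambda>_. N) X UNIV" and law: "\<And>i. distr M N (X i) = P"
    and A: "A \<in> sets N" and b: "measure P A \<le> b" "0 \<le> b" and n: "n > 0" and c: "c > 0"
  shows "prob {\<omega> \<in> space M. b + c * sqrt (b / real n) < (\<Sum>i<n. indicator A (X i \<omega>)) / real n}
           \<le> 1 / c\<^sup>2"
proof -
  have [measurable]: "X i \<in> measurable M N" for i
    using ind unfolding indep_vars_def by auto
  note [measurable] = A
  consider "b = 0" | "b > 0"
    using b by linarith
  then show ?thesis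
  proof cases
    case 1
    then have "measure P A = 0"
      using b by (simp add: antisym)
    then show ?thesis
      using 1 prob_empirical_frequency_pos_eq_0[OF _ law A] by simp
  next
    case 2
    define s where "s = c * sqrt (b / real n)"
    have s: "s > 0"
      using 2 n c by (simp add: s_def)
    have "prob {\<omega> \<in> space M. b + s < (\<Sum>i<n. indicator A (X i \<omega>)) / real n}
        \<le> prob {\<omega> \<in> space M. s \<le> \<bar>(\<Sum>i<n. indicator A (X i \<omega>)) / real n - measure P A\<bar>}"
      using b by (intro finite_measure_mono) auto
    also have "\<dots> \<le> measure P A / (real n * s\<^sup>2)"
      by (rule empirical_frequency_Chebyshev[OF ind law A n s])
    also have "\<dots> \<le> b / (real n * s\<^sup>2)"
      using b by (intro divide_right_mono) auto
    also have "\<dots> = 1 / c\<^sup>2"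
      using 2 n c by (simp add: s_def power_mult_distrib)
    finally show ?thesis
      unfolding s_def .
  qed
qed

lemma (in prob_space) OpE:
  assumes "Op M X r" and [measurable]: "\<And>n. X n \<in> borel_measurable M"
    and r: "\<And>n. 0 \<le> r n" and "\<eta> > 0"
  obtains C N where "C \<ge> 1" "\<And>n. N \<le> n \<Longrightarrow> prob {\<omega> \<in> space M. C * r n < \<bar>X n \<omega>\<bar>} < \<eta>"
proof -
  obtain C N where CN: "\<And>n. N \<le> n \<Longrightarrow> prob {\<omega> \<in> space M. C * r n < \<bar>X n \<omega>\<bar>} < \<eta>"
    using assms unfolding Op_def by blast
  have "prob {\<omega> \<in> space M. max C 1 * r n < \<bar>X n \<omega>\<bar>} < \<eta>" if "N \<le> n" for n
  proof -
    have "prob {\<omega> \<in> space M. max C 1 * r n < \<bar>X n \<omega>\<bar>}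
        \<le> prob {\<omega> \<in> space M. C * r n < \<bar>X n \<omega>\<bar>}"
    proof -
      have "C * r n \<le> max C 1 * r n"
        using r[of n] by (intro mult_right_mono) auto
      then show ?thesis
        by (intro finite_measure_mono) auto
    qed
    then show ?thesis
      using CN[OF that] by linarith
  qed
  then show ?thesis
    using that[of "max C 1" N] by auto
qed

lemma (in prob_space) Op_add:
  assumes X: "Op M X r" and Y: "Op M Y s"
    and X_meas[measurable]: "\<And>n. X n \<in> borel_measurable M"
    and Y_meas[measurable]: "\<And>n. Y n \<in> borel_measurable M"
    and r: "\<And>n. 0 \<le> r n" and s: "\<And>n. 0 \<le> s n"
    and Z: "\<And>n \<omega>. \<omega> \<in> space M \<Longrightarrow> \<bar>Z n \<omega>\<bar> \<le> \<bar>X n \<omega>\<bar> + \<bar>Y n \<omega>\<bar>"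
  shows "Op M Z (\<lambda>n. r n + s n)"
  unfolding Op_def
proof (intro allI impI)
  fix \<eta> :: real
  assume "\<eta> > 0"
  then have "\<eta> / 2 > 0"
    by simp
  obtain C1 N1 where C1: "\<And>n. N1 \<le> n \<Longrightarrow> prob {\<omega> \<in> space M. C1 * r n < \<bar>X n \<omega>\<bar>} < \<eta> / 2"
    using OpE[OF X X_meas r \<open>\<eta> / 2 > 0\<close>] by blast
  obtain C2 N2 where C2: "\<And>n. N2 \<le> n \<Longrightarrow> prob {\<omega> \<in> space M. C2 * s n < \<bar>Y n \<omega>\<bar>} < \<eta> / 2"
    using OpE[OF Y Y_meas s \<open>\<eta> / 2 > 0\<close>] by blast
  define C where "C = max C1 C2"
  have "prob {\<omega> \<in> space M. C * (r n + s n) < \<bar>Z n \<omega>\<bar>} < \<eta>" if "max N1 N2 \<le> n" for n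
  proof -
    have "{\<omega> \<in> space M. C * (r n + s n) < \<bar>Z n \<omega>\<bar>}
        \<subseteq> {\<omega> \<in> space M. C1 * r n < \<bar>X n \<omega>\<bar>} \<union> {\<omega> \<in> space M. C2 * s n < \<bar>Y n \<omega>\<bar>}"
    proof clarify
      fix \<omega> assume "\<omega> \<in> space M" "C * (r n + s n) < \<bar>Z n \<omega>\<bar>" "\<not> C2 * s n < \<bar>Y n \<omega>\<bar>"
      moreover have "C1 * r n \<le> C * r n" "C2 * s n \<le> C * s n"
        using r[of n] s[of n] by (auto simp: C_def intro: mult_right_mono)
      ultimately show "C1 * r n < \<bar>X n \<omega>\<bar>"
        using Z[of \<omega> n] by (simp add: distrib_left)
    qed
    then have "prob {\<omega> \<in> space M. C * (r n + s n) < \<bar>Z n \<omega>\<bar>}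
        \<le> prob {\<omega> \<in> space M. C1 * r n < \<bar>X n \<omega>\<bar>} + prob {\<omega> \<in> space M. C2 * s n < \<bar>Y n \<omega>\<bar>}"
      by (intro order_trans[OF finite_measure_mono measure_Un_le]) auto
    then show ?thesis
      using C1[of n] C2[of n] that by simp
  qed
  then show "\<exists>C N. \<forall>n\<ge>N. prob {\<omega> \<in> space M. \<bar>Z n \<omega>\<bar> > C * (r n + s n)} < \<eta>"
    by blast
qed

lemma (in prob_space) Op_sum:
  fixes X :: "'i \<Rightarrow> nat \<Rightarrow> 'a \<Rightarrow> real"
  assumes "finite I" and "\<And>j. j \<in> I \<Longrightarrow> Op M (X j) (r j)"
    and "\<And>j n. X j n \<in> borel_measurable M" and "\<And>j n. 0 \<le> r j n"
  shows "Op M (\<lambda>n \<omega>. \<Sum>j\<in>I. X j n \<omega>) (\<lambda>n. \<Sum>j\<in>I. r j n)"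
  using assms
proof (induction I rule: finite_induct)
  case empty
  then show ?case
    by (simp add: Op_def)
next
  case (insert j I)
  have "Op M (\<lambda>n \<omega>. X j n \<omega> + (\<Sum>j\<in>I. X j n \<omega>)) (\<lambda>n. r j n + (\<Sum>j\<in>I. r j n))"
  proof (rule Op_add[where X = "X j" and Y = "\<lambda>n \<omega>. \<Sum>j\<in>I. X j n \<omega>"])
    show "(\<lambda>\<omega>. \<Sum>j\<in>I. X j n \<omega>) \<in> borel_measurable M" for n
      using insert.prems(2) by measurable
  qed (use insert in \<open>auto intro: sum_nonneg abs_triangle_ineq\<close>)
  then show ?case
    using insert.hyps by simp
qed

lemma (in prob_space) Op_sum_max_block_displacement:
  fixes blk :: "'n::finite \<Rightarrow> 'd::finite"
  assumes "\<And>j. Op M (\<lambda>n \<omega>. Max (insert 0 ((\<lambda>i. norm (bproj blk j (Y n i \<omega>) - bproj blk j (X i \<omega>))) ` {..<n})))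
      (\<lambda>n. a n j)"
    and "\<And>n i. Y n i \<in> borel_measurable M" "\<And>i. X i \<in> borel_measurable M" "\<And>n j. 0 \<le> a n j"
  shows "Op M (\<lambda>n \<omega>. \<Sum>j\<in>UNIV. max_block_displacement blk j n (\<lambda>i. Y n i \<omega>) (\<lambda>i. X i \<omega>))
    (\<lambda>n. \<Sum>j\<in>UNIV. a n j)"
  using assms by (intro Op_sum borel_measurable_max_block_displacement) (auto simp: max_block_displacement_def)

lemma (in prob_space) Op_rate_mono:
  assumes X: "Op M X r" and X_meas: "\<And>n. X n \<in> borel_measurable M"
    and r: "\<And>n. 0 \<le> r n" and rs: "\<And>n. r n \<le> c * s n"
  shows "Op M X s"
  unfolding Op_def
proof (intro allI impI)
  fix \<eta> :: real
  assume "\<eta> > 0"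
  then obtain C N where C: "C \<ge> 1" and CN: "\<And>n. N \<le> n \<Longrightarrow> prob {\<omega> \<in> space M. C * r n < \<bar>X n \<omega>\<bar>} < \<eta>"
    using OpE[OF X X_meas r] by blast
  have "prob {\<omega> \<in> space M. C * c * s n < \<bar>X n \<omega>\<bar>} < \<eta>" if "N \<le> n" for n
  proof -
    have "C * r n \<le> C * c * s n"
      using C rs[of n] by (simp add: mult.assoc)
    then have "prob {\<omega> \<in> space M. C * c * s n < \<bar>X n \<omega>\<bar>} \<le> prob {\<omega> \<in> space M. C * r n < \<bar>X n \<omega>\<bar>}"
      using X_meas by (intro finite_measure_mono) auto
    then show ?thesis
      using CN[OF that] by linarith
  qed
  then show "\<exists>C N. \<forall>n\<ge>N. prob {\<omega> \<in> space M. \<bar>X n \<omega>\<bar> > C * s n} < \<eta>"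
    by blast
qed

lemma (in prob_space) Op_empirical_frequency:
  fixes X :: "nat \<Rightarrow> 'a \<Rightarrow> 'b"
  assumes ind: "indep_vars (\<lambda>_. N) X UNIV" and law: "\<And>i. distr M N (X i) = P"
    and A: "A \<in> sets N"
  shows "Op M (\<lambda>n \<omega>. (\<Sum>i<n. indicator A (X i \<omega>)) / real n - measure P A) (\<lambda>n. 1 / sqrt (real n))"
  unfolding Op_def
proof (intro allI impI)
  fix \<eta> :: real
  assume \<eta>: "\<eta> > 0"
  define C where "C = sqrt (2 / \<eta>)"
  have [measurable]: "X i \<in> measurable M N" for i
    using ind unfolding indep_vars_def by auto
  have "prob {\<omega> \<in> space M. C * (1 / sqrt (real n)) < \<bar>(\<Sum>i<n. indicator A (X i \<omega>)) / real n - measure P A\<bar>}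
      < \<eta>" if n: "1 \<le> n" for n
  proof -
    have "prob {\<omega> \<in> space M. C * (1 / sqrt (real n)) < \<bar>(\<Sum>i<n. indicator A (X i \<omega>)) / real n - measure P A\<bar>}
        \<le> prob {\<omega> \<in> space M. C / sqrt (real n) \<le> \<bar>(\<Sum>i<n. indicator A (X i \<omega>)) / real n - measure P A\<bar>}"
      using A by (intro finite_measure_mono) auto
    also have "\<dots> \<le> measure P A / (real n * (C / sqrt (real n))\<^sup>2)"
      using n \<eta> by (intro empirical_frequency_Chebyshev[OF ind law A]) (auto simp: C_def)
    also have "\<dots> = measure P A * (\<eta> / 2)"
      using n \<eta> by (simp add: C_def power_divide)
    also have "\<dots> < \<eta>"
    proof -
      have "measure P A = prob {\<omega> \<in> space M. X 0 \<omega> \<in> A}"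
        using law A by (intro prob_eq_measure_distr[symmetric]) auto
      then have "measure P A * (\<eta> / 2) \<le> 1 * (\<eta> / 2)"
        using \<eta> by (intro mult_right_mono) auto
      then show ?thesis
        using \<eta> by linarith
    qed
    finally show ?thesis .
  qed
  then show "\<exists>C N. \<forall>n\<ge>N. prob {\<omega> \<in> space M. \<bar>(\<Sum>i<n. indicator A (X i \<omega>)) / real n - measure P A\<bar> > C * (1 / sqrt (real n))} < \<eta>"
    by blast
qed

lemma abs_frequency_diff_le:
  fixes x y :: "nat \<Rightarrow> 'b"
  assumes "\<And>i. i < n \<Longrightarrow> \<bar>indicator A (y i) - indicator A (x i)\<bar> \<le> (indicator B (x i) :: real)"
  shows "\<bar>(\<Sum>i<n. indicator A (y i)) / real n - (\<Sum>i<n. indicator A (x i)) / real n\<bar>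
           \<le> (\<Sum>i<n. indicator B (x i)) / real n"
proof -
  have "\<bar>(\<Sum>i<n. indicator A (y i)) / real n - (\<Sum>i<n. indicator A (x i)) / real n\<bar>
      = \<bar>\<Sum>i<n. indicator A (y i) - indicator A (x i)\<bar> / real n"
    by (simp add: diff_divide_distrib[symmetric] sum_subtractf)
  also have "\<dots> \<le> (\<Sum>i<n. \<bar>indicator A (y i) - indicator A (x i)\<bar>) / real n"
    by (intro divide_right_mono sum_abs) auto
  also have "\<dots> \<le> (\<Sum>i<n. indicator B (x i)) / real n"
    using assms by (intro divide_right_mono sum_mono) auto
  finally show ?thesis .
qed

lemma (in prob_space) prob_perturbed_frequency_gt:
  fixes X Xt :: "nat \<Rightarrow> 'a \<Rightarrow> 'b" and \<Delta> :: "'a \<Rightarrow> real"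
  assumes ind: "indep_vars (\<lambda>_. N) X UNIV" and law: "\<And>i. distr M N (X i) = P"
    and T: "T \<in> sets N" "measure P T \<le> b" "0 \<le> b" and n: "n > 0" and c: "c > 0"
    and t: "b + c * sqrt (b / real n) \<le> t" and \<Delta>: "\<Delta> \<in> borel_measurable M"
    and switch: "\<And>i \<omega>. \<omega> \<in> space M \<Longrightarrow> i < n \<Longrightarrow> \<bar>\<Delta> \<omega>\<bar> \<le> \<delta> \<Longrightarrow>
        \<bar>indicator A (Xt i \<omega>) - indicator A (X i \<omega>)\<bar> \<le> (indicator T (X i \<omega>) :: real)"
  shows "prob {\<omega> \<in> space M. t < \<bar>(\<Sum>i<n. indicator A (Xt i \<omega>)) / real n - (\<Sum>i<n. indicator A (X i \<omega>)) / real n\<bar>}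
           \<le> prob {\<omega> \<in> space M. \<delta> < \<bar>\<Delta> \<omega>\<bar>} + 1 / c\<^sup>2"
proof -
  have [measurable]: "X i \<in> measurable M N" for i
    using ind unfolding indep_vars_def by auto
  note [measurable] = T(1) \<Delta>
  define G where "G = {\<omega> \<in> space M. \<delta> < \<bar>\<Delta> \<omega>\<bar>}"
  define H where "H = {\<omega> \<in> space M. b + c * sqrt (b / real n) < (\<Sum>i<n. indicator T (X i \<omega>)) / real n}"
  have "{\<omega> \<in> space M. t < \<bar>(\<Sum>i<n. indicator A (Xt i \<omega>)) / real n - (\<Sum>i<n. indicator A (X i \<omega>)) / real n\<bar>}
      \<subseteq> G \<union> H"
  proof
    fix \<omega>
    assume \<omega>: "\<omega> \<in> {\<omega> \<in> space M. t < \<bar>(\<Sum>i<n. indicator A (Xt i \<omega>)) / real n - (\<Sum>i<n. indicator A (X i \<omega>)) / real n\<bar>}"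
    show "\<omega> \<in> G \<union> H"
    proof (cases "\<omega> \<in> G")
      case False
      then have "\<bar>(\<Sum>i<n. indicator A (Xt i \<omega>)) / real n - (\<Sum>i<n. indicator A (X i \<omega>)) / real n\<bar>
          \<le> (\<Sum>i<n. indicator T (X i \<omega>)) / real n"
        using \<omega> by (intro abs_frequency_diff_le switch) (auto simp: G_def)
      then show ?thesis
        using \<omega> t by (auto simp: H_def)
    qed simp
  qed
  then have "prob {\<omega> \<in> space M. t < \<bar>(\<Sum>i<n. indicator A (Xt i \<omega>)) / real n - (\<Sum>i<n. indicator A (X i \<omega>)) / real n\<bar>}
      \<le> prob G + prob H"
    by (intro order_trans[OF finite_measure_mono measure_Un_le]) (auto simp: G_def H_def)
  also have "prob H \<le> 1 / c\<^sup>2"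
    unfolding H_def using T n c by (intro prob_empirical_frequency_gt[OF ind law])
  finally show ?thesis
    by (simp add: G_def)
qed

lemma mult_add_sqrt_le:
  fixes k c s :: real
  assumes "0 \<le> k" "0 \<le> c" "0 \<le> s"
  shows "k * s + c * sqrt (k * s / real n) \<le> (k + c * sqrt k) * (s + sqrt s / sqrt (real n))"
proof -
  define q where "q = sqrt s / sqrt (real n)"
  have "c * sqrt (k * s / real n) = c * sqrt k * q"
    by (simp add: q_def real_sqrt_mult real_sqrt_divide)
  moreover have "(k + c * sqrt k) * (s + q) = k * s + k * q + c * sqrt k * s + c * sqrt k * q"
    by (simp add: algebra_simps)
  moreover have "0 \<le> c * sqrt k * s" "0 \<le> k * q"
    using assms by (auto simp: q_def)
  ultimately show ?thesis
    unfolding q_def[symmetric] by linarith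
qed

lemma sqrt_divide_sqrt_le:
  assumes "0 \<le> s"
  shows "sqrt s / sqrt (real n) \<le> s + 1 / sqrt (real n)"
proof (cases "s \<le> 1")
  case True
  then show ?thesis
    using assms by (intro add_increasing divide_right_mono) auto
next
  case False
  have "sqrt s * 1 \<le> sqrt s * sqrt s"
    using False by (intro mult_left_mono) auto
  then have "sqrt s \<le> s"
    using assms by simp
  moreover have "sqrt s / sqrt (real n) \<le> sqrt s"
  proof (cases "n = 0")
    case False
    then have "sqrt s / sqrt (real n) \<le> sqrt s / 1"
      using assms by (intro divide_left_mono) auto
    then show ?thesis
      by simp
  qed (simp add: assms)
  moreover have "0 \<le> 1 / sqrt (real n)"
    by simp
  ultimately show ?thesis
    by linarith
qed

locale perturbed_sample = prob_space +
  fixes N P :: "'b measure" and X :: "nat \<Rightarrow> 'a \<Rightarrow> 'b" and Xt :: "nat \<Rightarrow> nat \<Rightarrow> 'a \<Rightarrow> 'b"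
    and A :: "'b set" and T :: "real \<Rightarrow> 'b set" and \<delta>\<^sub>0 K :: real
    and \<Delta> :: "nat \<Rightarrow> 'a \<Rightarrow> real" and \<sigma> :: "nat \<Rightarrow> real"
  assumes ind: "indep_vars (\<lambda>_. N) X UNIV" and law: "\<And>i. distr M N (X i) = P"
    and Xt: "\<And>n i. Xt n i \<in> measurable M N"
    and A: "A \<in> sets N" and T_sets: "\<And>\<delta>. 0 \<le> \<delta> \<Longrightarrow> T \<delta> \<in> sets N"
    and \<delta>\<^sub>0: "\<delta>\<^sub>0 > 0" and T_small: "\<And>\<delta>. 0 \<le> \<delta> \<Longrightarrow> \<delta> \<le> \<delta>\<^sub>0 \<Longrightarrow> measure P (T \<delta>) \<le> K * \<delta>"
    and \<Delta>: "Op M \<Delta> \<sigma>" and \<Delta>_meas: "\<And>n. \<Delta> n \<in> borel_measurable M"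
    and \<sigma>: "\<And>n. 0 \<le> \<sigma> n" "\<sigma> \<longlonglongrightarrow> 0"
    and switch: "\<And>n i \<omega> \<delta>. \<omega> \<in> space M \<Longrightarrow> i < n \<Longrightarrow> \<bar>\<Delta> n \<omega>\<bar> \<le> \<delta> \<Longrightarrow> \<delta> \<le> \<delta>\<^sub>0 \<Longrightarrow>
        \<bar>indicator A (Xt n i \<omega>) - indicator A (X i \<omega>)\<bar> \<le> (indicator (T \<delta>) (X i \<omega>) :: real)"
begin

lemma prob_frequency_difference_gt:
  assumes C: "C \<ge> 1" "C * \<sigma> n \<le> \<delta>\<^sub>0" and n: "n > 0" and c: "c > 0"
  shows "prob {\<omega> \<in> space M. (max K 1 * C + c * sqrt (max K 1 * C)) * (\<sigma> n + sqrt (\<sigma> n) / sqrt (real n)) <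
           \<bar>(\<Sum>i<n. indicator A (Xt n i \<omega>)) / real n - (\<Sum>i<n. indicator A (X i \<omega>)) / real n\<bar>}
         \<le> prob {\<omega> \<in> space M. C * \<sigma> n < \<bar>\<Delta> n \<omega>\<bar>} + 1 / c\<^sup>2"
proof -
  define \<delta> where "\<delta> = C * \<sigma> n"
  define b where "b = max K 1 * C * \<sigma> n"
  have \<delta>: "0 \<le> \<delta>" "\<delta> \<le> \<delta>\<^sub>0"
    using C \<sigma>(1)[of n] by (auto simp: \<delta>_def)
  have "K * \<delta> \<le> b"
    using \<delta>(1) by (auto simp: b_def \<delta>_def mult.assoc intro: mult_right_mono)
  then have b: "measure P (T \<delta>) \<le> b" "0 \<le> b"
    using T_small[OF \<delta>] C \<sigma>(1)[of n] by (auto simp: b_def)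
  have "b + c * sqrt (b / real n)
      \<le> (max K 1 * C + c * sqrt (max K 1 * C)) * (\<sigma> n + sqrt (\<sigma> n) / sqrt (real n))"
    unfolding b_def using C c \<sigma>(1)[of n] by (intro mult_add_sqrt_le) auto
  then show ?thesis
    using T_sets[OF \<delta>(1)] b n c \<delta> switch \<Delta>_meas unfolding \<delta>_def
    by (intro prob_perturbed_frequency_gt[OF ind law, where Xt = "Xt n"]) auto
qed

lemma Op_frequency_difference:
  "Op M (\<lambda>n \<omega>. \<bar>(\<Sum>i<n. indicator A (Xt n i \<omega>)) / real n - (\<Sum>i<n. indicator A (X i \<omega>)) / real n\<bar>)
     (\<lambda>n. \<sigma> n + sqrt (\<sigma> n) / sqrt (real n))"
  unfolding Op_def abs_abs
proof (intro allI impI)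
  fix \<eta> :: real
  assume \<eta>: "\<eta> > 0"
  then have "\<eta> / 2 > 0"
    by simp
  then obtain C N\<^sub>1 where C: "C \<ge> 1"
    and CN\<^sub>1: "\<And>n. N\<^sub>1 \<le> n \<Longrightarrow> prob {\<omega> \<in> space M. C * \<sigma> n < \<bar>\<Delta> n \<omega>\<bar>} < \<eta> / 2"
    using OpE[OF \<Delta> \<Delta>_meas \<sigma>(1)] by blast
  have "(\<lambda>n. C * \<sigma> n) \<longlonglongrightarrow> C * 0"
    by (intro tendsto_mult tendsto_const \<sigma>(2))
  then have "eventually (\<lambda>n. C * \<sigma> n < \<delta>\<^sub>0) sequentially"
    using \<delta>\<^sub>0 by (intro order_tendstoD(2)) auto
  then obtain N\<^sub>2 where N\<^sub>2: "\<And>n. N\<^sub>2 \<le> n \<Longrightarrow> C * \<sigma> n < \<delta>\<^sub>0"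
    by (auto simp: eventually_sequentially)
  \<comment> \<open>\<open>c\<close> is chosen so that Chebyshev's bound \<open>1 / c\<^sup>2\<close> on the layer frequency is \<open>\<eta> / 2\<close>.\<close>
  define c where "c = sqrt (2 / \<eta>)"
  have "prob {\<omega> \<in> space M. (max K 1 * C + c * sqrt (max K 1 * C)) * (\<sigma> n + sqrt (\<sigma> n) / sqrt (real n)) <
           \<bar>(\<Sum>i<n. indicator A (Xt n i \<omega>)) / real n - (\<Sum>i<n. indicator A (X i \<omega>)) / real n\<bar>} < \<eta>"
    if "max N\<^sub>1 (max N\<^sub>2 1) \<le> n" for n
  proof -
    have "C * \<sigma> n \<le> \<delta>\<^sub>0" "n > 0" "c > 0"
      using N\<^sub>2[of n] that \<eta> by (auto simp: c_def)
    then show ?thesis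
      using prob_frequency_difference_gt[OF C] CN\<^sub>1[of n] that \<eta> by (fastforce simp: c_def)
  qed
  then show "\<exists>C N. \<forall>n\<ge>N. prob {\<omega> \<in> space M. \<bar>(\<Sum>i<n. indicator A (Xt n i \<omega>)) / real n -
      (\<Sum>i<n. indicator A (X i \<omega>)) / real n\<bar> > C * (\<sigma> n + sqrt (\<sigma> n) / sqrt (real n))} < \<eta>"
    by blast
qed

lemma Op_frequency_deviation:
  "Op M (\<lambda>n \<omega>. \<bar>(\<Sum>i<n. indicator A (Xt n i \<omega>)) / real n - measure P A\<bar>) (\<lambda>n. \<sigma> n + 1 / sqrt (real n))"
proof -
  have [measurable]: "X i \<in> measurable M N" for i
    using ind unfolding indep_vars_def by auto
  note [measurable] = A Xt
  have "Op M (\<lambda>n \<omega>. \<bar>(\<Sum>i<n. indicator A (Xt n i \<omega>)) / real n - measure P A\<bar>)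
      (\<lambda>n. (\<sigma> n + sqrt (\<sigma> n) / sqrt (real n)) + 1 / sqrt (real n))"
  proof (rule Op_add[OF Op_frequency_difference Op_empirical_frequency[OF ind law A]])
    show "0 \<le> \<sigma> n + sqrt (\<sigma> n) / sqrt (real n)" for n
      using \<sigma>(1)[of n] by simp
  qed simp_all
  then show ?thesis
  proof (rule Op_rate_mono[where c = 2])
    show "0 \<le> \<sigma> n + sqrt (\<sigma> n) / sqrt (real n) + 1 / sqrt (real n)" for n
      using \<sigma>(1)[of n] by simp
    show "\<sigma> n + sqrt (\<sigma> n) / sqrt (real n) + 1 / sqrt (real n) \<le> 2 * (\<sigma> n + 1 / sqrt (real n))" for n
      using sqrt_divide_sqrt_le[OF \<sigma>(1)[of n], of n] by simp
  qed simp
qed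

end

theorem lemmaS3:
  fixes M :: "'a measure"
    and blk :: "'n::finite \<Rightarrow> 'd::finite"
    and D :: "'d \<Rightarrow> (real^'n) set"
    and p :: "real^'n \<Rightarrow> real"
    and \<epsilon> :: real
    and xi :: "nat \<Rightarrow> 'a \<Rightarrow> real^'n"
    and xt :: "nat \<Rightarrow> nat \<Rightarrow> 'a \<Rightarrow> real^'n"
    and a :: "nat \<Rightarrow> 'd \<Rightarrow> real"
  assumes "prob_space M"
    and D_sub: "\<And>j. D j \<subseteq> block_subspace blk j"
    and D_compact: "\<And>j. compact (D j)"
    and D_convex: "\<And>j. convex (D j)"
    and eps: "\<epsilon> > 0"
    and p_bounded: "\<exists>B. \<forall>x\<in>enlarged blk D \<epsilon>. \<bar>p x\<bar> \<le> B"
    and xi_dist: "\<And>i. distributed M lborel (xi i) (\<lambda>x. ennreal (p x))"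
    and xi_indep: "prob_space.indep_vars M (\<lambda>_. borel) xi UNIV"
    and xt_meas: "\<And>n i. xt n i \<in> borel_measurable M"
    and a_nonneg: "\<And>n j. a n j \<ge> 0"
    and a_small: "\<And>j. (\<lambda>n. a n j) \<longlonglongrightarrow> 0"
    and xt_close: "\<And>j. Op M (\<lambda>n \<omega>. Max (insert 0
              ((\<lambda>i. norm (bproj blk j (xt n i \<omega>) - bproj blk j (xi i \<omega>))) ` {..<n})))
            (\<lambda>n. a n j)"
  shows "Op M (\<lambda>n \<omega>. \<bar>(\<Sum>i<n. indicator (prod_blocks blk D) (xt n i \<omega>)) / real n
                     - (\<Sum>i<n. indicator (prod_blocks blk D) (xi i \<omega>)) / real n\<bar>)
           (\<lambda>n. (\<Sum>j\<in>UNIV. a n j) + sqrt (\<Sum>j\<in>UNIV. a n j) / sqrt (real n))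
       \<and> Op M (\<lambda>n \<omega>. \<bar>(\<Sum>i<n. indicator (prod_blocks blk D) (xt n i \<omega>)) / real n
                     - measure (density lborel (\<lambda>x. ennreal (p x))) (prod_blocks blk D)\<bar>)
           (\<lambda>n. (\<Sum>j\<in>UNIV. a n j) + 1 / sqrt (real n))"
proof -
  interpret prob_space M by fact
  define \<Delta> where "\<Delta> n \<omega> = (\<Sum>j\<in>UNIV. max_block_displacement blk j n (\<lambda>i. xt n i \<omega>) (\<lambda>i. xi i \<omega>))" for n \<omega>
  have xi_meas: "xi i \<in> borel_measurable M" for i
    using distributed_measurable[OF xi_dist[of i]] by simp
  obtain \<delta>\<^sub>0 K where \<delta>\<^sub>0: "0 < \<delta>\<^sub>0" "\<delta>\<^sub>0 \<le> \<epsilon>" and layer: "\<And>\<delta>. 0 \<le> \<delta> \<Longrightarrow> \<delta> \<le> \<delta>\<^sub>0 \<Longrightarrow>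
      measure (density lborel (\<lambda>x. ennreal (p x))) (block_boundary_layer blk D \<epsilon> \<delta>) \<le> K * \<delta>"
    using p_bounded distributed_borel_measurable[OF xi_dist[of 0]]
    by (metis measure_block_boundary_layer_le[where D = D and blk = blk and \<epsilon> = \<epsilon>, OF D_compact D_convex eps])
  interpret perturbed_sample M borel "density lborel (\<lambda>x. ennreal (p x))" xi xt "prod_blocks blk D"
    "block_boundary_layer blk D \<epsilon>" \<delta>\<^sub>0 K \<Delta> "\<lambda>n. \<Sum>j\<in>UNIV. a n j"
  proof
    show "distr M borel (xi i) = density lborel (\<lambda>x. ennreal (p x))" for i
      using distributed_distr_eq_density[OF xi_dist[of i]] by (metis distr_cong sets_lborel)
    show "prod_blocks blk D \<in> sets borel"
      using D_compact by (intro borel_closed closed_prod_blocks compact_imp_closed)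
    show "block_boundary_layer blk D \<epsilon> \<delta> \<in> sets borel" if "0 \<le> \<delta>" for \<delta>
      using D_compact eps that by (intro block_boundary_layer_borel compact_imp_closed) auto
    show "Op M \<Delta> (\<lambda>n. \<Sum>j\<in>UNIV. a n j)"
      unfolding \<Delta>_def using xt_close xt_meas xi_meas a_nonneg by (rule Op_sum_max_block_displacement)
    show "\<Delta> n \<in> borel_measurable M" for n
      unfolding \<Delta>_def using xt_meas xi_meas
      by (intro borel_measurable_sum borel_measurable_max_block_displacement) auto
    show "\<bar>indicator (prod_blocks blk D) (xt n i \<omega>) - indicator (prod_blocks blk D) (xi i \<omega>)\<bar>
        \<le> (indicator (block_boundary_layer blk D \<epsilon> \<delta>) (xi i \<omega>) :: real)"
      if "i < n" "\<bar>\<Delta> n \<omega>\<bar> \<le> \<delta>" "\<delta> \<le> \<delta>\<^sub>0" for n i \<omega> \<delta>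
      using that \<delta>\<^sub>0 by (intro indicator_prod_blocks_diff_le_displacement[where y = "\<lambda>i. xt n i \<omega>"]) (auto simp: \<Delta>_def)
  qed (use xi_indep xt_meas \<delta>\<^sub>0 layer a_nonneg a_small in \<open>auto intro: sum_nonneg tendsto_null_sum\<close>)
  show ?thesis
    using Op_frequency_difference Op_frequency_deviation by (rule conjI)
qed

end
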